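(* Let $\kappa=0$ and $c=\cos\alpha\ge 0$. Then for every $g\in SO(3)$ there is an optimal decomposition of $g$ which is a subword of one of the following patterns, or of an image of one of them under the group $(X,Y)\mapsto(\pm X,\pm Y)$: (IX) $R(\pi Y)\,R(tW_+)\,R(\pi Y)$ with $t\ge0$; (X) $R(\pi Y)\,R(tW_+)\,R(-\pi Y)$ with $t\ge 0$. (Here $W_+=W_-=X-cY$.)
   Context: Fix unit vectors $X,Y\in\mathbb R^3$ with angle $\alpha\in(0,\pi/2]$, $c=\cos\alpha$, and $\kappa\in[0,1]$. For a unit vector $v$, $R(tv)\in SO(3)$ is rotation by angle $t$ about $v$ (counterclockwise viewed from the tip): $R(tv)=\cos t\,I+\sin t\,[v]_\times+(1-\cos t)vv^T$; for nonzero non-unit $v$, $R(tv):=R((t|v|)\,v/|v|)$. For nonzero $C=aX+bY$, $\mathrm{cost}(C)=|a|+\kappa|b|$. A decomposition of $g\in SO(3)$ is a finite product $g=R(\tau_1C_1)\cdots R(\tau_nC_n)$ with $\tau_j\ge0$, $C_j$ nonzero in $\mathrm{span}\{X,Y\}$ (a factor $R(-\tau C)$, $\tau\ge0$, means $R(\tau(-C))$), with cost $\sum\tau_j\mathrm{cost}(C_j)$. Problem 1: minimize the cost over all decompositions of $g$; a decomposition is optimal if its cost equals the infimum. $W_+=(1+\kappa c)X-(\kappa+c)Y$, $W_-=(1-\kappa c)X+(\kappa-c)Y$. Subword: for a word $R(\tau_1C_1)\cdots R(\tau_nC_n)$ ($\tau_j\ge0$), a subword is $R(\tau_k'C_k)R(\tau_{k+1}C_{k+1})\cdots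 R(\tau_{m-1}C_{m-1})R(\tau_m'C_m)$ with $1\le k\le m\le n$, $0\le\tau_k'\le\tau_k$, $0\le\tau_m'\le\tau_m$. Symmetries: with labels $\pm X,\pm Y,\pm W_\pm$, let $\nu:C\mapsto-C$ and $\rho:X\mapsto X,\ Y\mapsto-Y,\ W_+\mapsto W_-,\ W_-\mapsto W_+$ (extended by $\rho(-C)=-\rho(C)$); applying them replaces each label by its image and keeps the times. "Under $(X,Y)\mapsto(\pm X,\pm Y)$" means images under the group $\{\mathrm{id},\nu,\rho,\nu\rho\}$. *)

theory Defs
  imports "HOL-Analysis.Analysis"
begin

definition SO3 :: "(real^3^3) set" where
  "SO3 = {g. orthogonal_matrix g \<and> det g = 1}"

(* cross-product matrix [v]_x, so that [v]_x *v w = v \<times> w *)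
definition cross_mat :: "real^3 \<Rightarrow> real^3^3" where
  "cross_mat v = vector [vector [0, - v$3, v$2],
                         vector [v$3, 0, - v$1],
                         vector [- v$2, v$1, 0]]"

definition outer :: "real^3 \<Rightarrow> real^3 \<Rightarrow> real^3^3" where
  "outer u v = (\<chi> i j. u$i * v$j)"

(* R(t v) for unit v *)
definition rot_unit :: "real \<Rightarrow> real^3 \<Rightarrow> real^3^3" where
  "rot_unit t v = cos t *\<^sub>R mat 1 + sin t *\<^sub>R cross_mat v + (1 - cos t) *\<^sub>R outer v v"

definition rot :: "real \<Rightarrow> real^3 \<Rightarrow> real^3^3" where
  "rot t v = rot_unit (t * norm v) (inverse (norm v) *\<^sub>R v)"

definition cost :: "real \<Rightarrow> real^3 \<Rightarrow> real^3 \<Rightarrow> real^3 \<Rightarrow> real" where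
  "cost \<kappa> X Y C = (THE r. \<exists>a b. C = a *\<^sub>R X + b *\<^sub>R Y \<and> r = \<bar>a\<bar> + \<kappa> * \<bar>b\<bar>)"

(* a word R(tau_1 C_1) ... R(tau_n C_n) is a list of pairs (tau_j, C_j) *)
definition word_prod :: "(real \<times> (real^3)) list \<Rightarrow> real^3^3" where
  "word_prod ds = foldr (\<lambda>(t, C) M. rot t C ** M) ds (mat 1)"

definition is_decomp :: "real^3 \<Rightarrow> real^3 \<Rightarrow> real^3^3 \<Rightarrow> (real \<times> (real^3)) list \<Rightarrow> bool" where
  "is_decomp X Y g ds \<longleftrightarrow>
     (\<forall>(t, C) \<in> set ds. 0 \<le> t \<and> C \<noteq> 0 \<and> C \<in> span {X, Y}) \<and> word_prod ds = g"

definition word_cost :: "real \<Rightarrow> real^3 \<Rightarrow> real^3 \<Rightarrow> (real \<times> (real^3)) list \<Rightarrow> real" where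
  "word_cost \<kappa> X Y ds = sum_list (map (\<lambda>(t, C). t * cost \<kappa> X Y C) ds)"

definition optimal_decomp :: "real \<Rightarrow> real^3 \<Rightarrow> real^3 \<Rightarrow> real^3^3 \<Rightarrow> (real \<times> (real^3)) list \<Rightarrow> bool" where
  "optimal_decomp \<kappa> X Y g ds \<longleftrightarrow> is_decomp X Y g ds \<and>
     word_cost \<kappa> X Y ds = Inf (word_cost \<kappa> X Y ` {ds'. is_decomp X Y g ds'})"

(* labels X, Y, W+, W- with a sign (True = +, False = -) *)
datatype lab = LX | LY | LWp | LWm

type_synonym slab = "bool \<times> lab"

definition lab_vec :: "real \<Rightarrow> real \<Rightarrow> real^3 \<Rightarrow> real^3 \<Rightarrow> lab \<Rightarrow> real^3" where
  "lab_vec \<kappa> c X Y l = (case l of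
       LX \<Rightarrow> X
     | LY \<Rightarrow> Y
     | LWp \<Rightarrow> (1 + \<kappa> * c) *\<^sub>R X - (\<kappa> + c) *\<^sub>R Y
     | LWm \<Rightarrow> (1 - \<kappa> * c) *\<^sub>R X + (\<kappa> - c) *\<^sub>R Y)"

definition slab_vec :: "real \<Rightarrow> real \<Rightarrow> real^3 \<Rightarrow> real^3 \<Rightarrow> slab \<Rightarrow> real^3" where
  "slab_vec \<kappa> c X Y sl = (if fst sl then lab_vec \<kappa> c X Y (snd sl) else - lab_vec \<kappa> c X Y (snd sl))"

definition nu :: "slab \<Rightarrow> slab" where
  "nu sl = (\<not> fst sl, snd sl)"

definition rho_lab :: "lab \<Rightarrow> slab" where
  "rho_lab l = (case l of LX \<Rightarrow> (True, LX) | LY \<Rightarrow> (False, LY)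
                 | LWp \<Rightarrow> (True, LWm) | LWm \<Rightarrow> (True, LWp))"

(* rho(-C) = -rho(C) *)
definition rho :: "slab \<Rightarrow> slab" where
  "rho sl = (fst sl = fst (rho_lab (snd sl)), snd (rho_lab (snd sl)))"

definition sym_group :: "(slab \<Rightarrow> slab) set" where
  "sym_group = {id, nu, rho, nu \<circ> rho}"

definition pattern_IX :: "real \<Rightarrow> (real \<times> slab) list" where
  "pattern_IX t = [(pi, (True, LY)), (t, (True, LWp)), (pi, (True, LY))]"

definition pattern_X :: "real \<Rightarrow> (real \<times> slab) list" where
  "pattern_X t = [(pi, (True, LY)), (t, (True, LWp)), (pi, (False, LY))]"

definition is_subword :: "(real \<times> 'a) list \<Rightarrow> (real \<times> 'a) list \<Rightarrow> bool" where
  "is_subword v w \<longleftrightarrow> (\<exists>k m t1 t2. k \<le> m \<and> m < length w \<and>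
      0 \<le> t1 \<and> t1 \<le> fst (w ! k) \<and> 0 \<le> t2 \<and> t2 \<le> fst (w ! m) \<and>
      v = (if k = m then [(t1, snd (w ! k))]
           else [(t1, snd (w ! k))] @ take (m - k - 1) (drop (k + 1) w) @ [(t2, snd (w ! m))]))"

definition eval_word :: "real \<Rightarrow> real \<Rightarrow> real^3 \<Rightarrow> real^3 \<Rightarrow> (real \<times> slab) list \<Rightarrow> (real \<times> (real^3)) list" where
  "eval_word \<kappa> c X Y w = map (\<lambda>(t, sl). (t, slab_vec \<kappa> c X Y sl)) w"

definition apply_sym :: "(slab \<Rightarrow> slab) \<Rightarrow> (real \<times> slab) list \<Rightarrow> (real \<times> slab) list" where
  "apply_sym \<sigma> w = map (\<lambda>(t, sl). (t, \<sigma> sl)) w"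

end

theory Submission
  imports Defs "HOL-Analysis.Cross3"
begin

unbundle cross3_syntax

(*
  For kappa = 0 rotations about the Y-axis are free, and a factor R(tau C) with C = aX + bY
  costs tau |a|.  Let s = |X x Y| (= sin alpha) and let beta be the spherical distance from
  Y to gY.

  By Rodrigues' formula R(tau C) moves a unit vector u through an angle at
  most tau |C x u|; for u = Y this is tau |a| s.  Since rotations are isometries of the
  sphere, the spherical triangle inequality shows that every decomposition of g costs at
  least beta / s.

  The vector W = X - cY (= W_+ = W_- for kappa = 0) has length s and is
  orthogonal to Y, so N = W / s completes Y to an orthonormal pair.  Every rotation has an
  Euler decomposition g = R(aY) R(beta N) R(bY); writing R(beta N) = R((beta/s) W) and
  normalising the outer angles into [0, pi] (reversing Y if necessary) gives a word of cost
  beta / s, hence an optimal one, and it is a subword of pattern (IX) or (X) or of its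
  image under rho.
*)

section \<open>Rodrigues' formula\<close>

lemma rot_unit_apply:
  "rot_unit t v *v w = cos t *\<^sub>R w + sin t *\<^sub>R (v \<times> w) + ((1 - cos t) * (v \<bullet> w)) *\<^sub>R v"
  by (simp add: rot_unit_def cross_mat_def outer_def vec_eq_iff forall_3 matrix_vector_mult_def
      sum_3 cross3_simps mat_def)

lemma rot_unit_axis: "norm v = 1 \<Longrightarrow> rot_unit t v *v v = v"
  by (simp add: rot_unit_apply norm_eq_1 algebra_simps)

lemma rot_unit_inner:
  assumes "norm v = 1"
  shows "(rot_unit t v *v w) \<bullet> (rot_unit t v *v w') = w \<bullet> w'"
proof -
  have vv: "v \<bullet> v = 1" using assms by (simp add: norm_eq_1)
  define P where "P = w \<bullet> (v \<times> w')"
  have cross_inner: "(v \<times> w) \<bullet> w' = - P" "w' \<bullet> (v \<times> w) = - P" "(v \<times> w') \<bullet> w = P"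
    "w \<bullet> (v \<times> w') = P"
    unfolding P_def by (simp_all add: cross3_simps)
  have "(v \<times> w) \<bullet> (v \<times> w') = (v \<bullet> v) * (w \<bullet> w') - (v \<bullet> w) * (v \<bullet> w')"
    by (simp add: cross3_simps)
  then have cross_cross: "(v \<times> w) \<bullet> (v \<times> w') = w \<bullet> w' - (v \<bullet> w) * (v \<bullet> w')"
    using vv by simp
  have axis_inner: "(v \<times> w) \<bullet> v = 0" "v \<bullet> (v \<times> w') = 0" "(v \<times> w') \<bullet> v = 0" "v \<bullet> (v \<times> w) = 0"
    by (simp_all add: dot_cross_self)
  have sc: "sin t * sin t + cos t * cos t = 1"
    using sin_cos_squared_add[of t] by (simp add: power2_eq_square)
  show ?thesis
    unfolding rot_unit_apply
    apply (simp only: inner_add_left inner_add_right inner_scaleR_left inner_scaleR_right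
        cross_inner cross_cross axis_inner vv inner_commute[of w' v] inner_commute[of w v]
        inner_commute[of w' w])
    using sc by algebra
qed

lemma orthogonal_matrix_inner:
  "orthogonal_matrix (A::real^'n^'n) \<Longrightarrow> (A *v x) \<bullet> (A *v y) = x \<bullet> y"
  using orthogonal_transformation_matrix[of "(*v) A"]
  by (simp add: matrix_vector_mul_linear orthogonal_transformation_def)

lemma orthogonal_matrix_norm:
  "orthogonal_matrix (A::real^'n^'n) \<Longrightarrow> norm (A *v x) = norm x"
  by (simp add: norm_eq_sqrt_inner orthogonal_matrix_inner)

(* Rodrigues' matrix about a unit axis lies in SO(3): it is orthogonal, and since it fixes
   its axis v and commutes with v x -, the identity R v x R y = det R * R (v x y) for
   orthogonal R forces det R = 1. *)

lemma rotation_matrix_rot_unit: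
  assumes v: "norm v = 1"
  shows "rotation_matrix (rot_unit t v)"
proof -
  let ?R = "rot_unit t v"
  have "orthogonal_transformation ((*v) ?R)"
    using v by (simp add: orthogonal_transformation_def rot_unit_inner matrix_vector_mul_linear)
  then have orth: "orthogonal_matrix ?R"
    using orthogonal_transformation_matrix[of "(*v) ?R"] by simp
  have "v \<noteq> 0" using v by auto
  then obtain y where y: "v \<times> y \<noteq> 0" using cross_basis_nonzero by blast
  have "(?R *v v) \<times> (?R *v y) = det ?R *\<^sub>R (?R *v (v \<times> y))"
    by (rule cross_orthogonal_matrix[OF orth])
  moreover have "(?R *v v) \<times> (?R *v y) = ?R *v (v \<times> y)"
    using v by (simp add: rot_unit_axis) (simp add: rot_unit_apply cross_add_right cross_mult_right dot_cross_self)
  ultimately have "(det ?R - 1) *\<^sub>R (?R *v (v \<times> y)) = 0" by (simp add: algebra_simps)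
  moreover have "?R *v (v \<times> y) \<noteq> 0" using orthogonal_matrix_norm[OF orth, of "v \<times> y"] y by auto
  ultimately show ?thesis using orth by (simp add: rotation_matrix_def)
qed

lemma rotation_matrix_rot: "C \<noteq> 0 \<Longrightarrow> rotation_matrix (rot t C)"
  by (simp add: rot_def rotation_matrix_rot_unit)

lemma rotation_matrix_mul:
  "rotation_matrix A \<Longrightarrow> rotation_matrix B \<Longrightarrow> rotation_matrix (A ** (B::real^'n^'n))"
  by (simp add: rotation_matrix_def orthogonal_matrix_mul det_mul)

lemma rot_unit_neg: "rot_unit t (- v) = rot_unit (- t) v"
  by (simp add: matrix_eq rot_unit_apply)

lemma rot_unit_periodic: "rot_unit (t - 2 * pi) v = rot_unit t v"
  by (simp add: rot_unit_def cos_diff sin_diff)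

(* Every rotation R(a Y) with 0 <= a <= 2 pi is a rotation by an angle in [0, pi] about Y or
   about -Y; this is what makes the half-turns R(+-pi Y) of the patterns suffice. *)

lemma rot_unit_as_short_rotation:
  assumes Y: "norm Y = 1" and a: "0 \<le> a" "a \<le> 2 * pi"
  shows "\<exists>t sg. 0 \<le> t \<and> t \<le> pi \<and> rot t (if sg then Y else - Y) = rot_unit a Y"
proof (cases "a \<le> pi")
  case True
  then show ?thesis using a Y by (intro exI[of _ a] exI[of _ True]) (simp add: rot_def)
next
  case False
  have "rot (2 * pi - a) (- Y) = rot_unit a Y"
    using Y by (simp add: rot_def rot_unit_neg rot_unit_periodic[of a Y, symmetric])
  then show ?thesis using False a by (intro exI[of _ "2 * pi - a"] exI[of _ False]) simp
qed

section \<open>Spherical distance\<close>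

definition sphere_dist :: "'a::real_inner \<Rightarrow> 'a \<Rightarrow> real" where
  "sphere_dist u v = arccos (u \<bullet> v)"

(* Cauchy-Schwarz for unit vectors, so that arccos is applied within [-1, 1]. *)

lemma inner_unit_bound:
  fixes a b :: "'a::real_inner"
  assumes "norm a = 1" "norm b = 1"
  shows "\<bar>a \<bullet> b\<bar> \<le> 1"
  using Cauchy_Schwarz_ineq2[of a b] assms by simp

lemma sphere_dist_nonneg: "norm u = 1 \<Longrightarrow> norm v = 1 \<Longrightarrow> 0 \<le> sphere_dist u v"
  using inner_unit_bound[of u v] by (simp add: sphere_dist_def arccos_lbound abs_le_iff)

lemma sphere_dist_orthogonal_matrix:
  "orthogonal_matrix (A::real^'n^'n) \<Longrightarrow> sphere_dist (A *v u) (A *v v) = sphere_dist u v"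
  by (simp add: sphere_dist_def orthogonal_matrix_inner)

(* The spherical triangle inequality: with A = d(a,b) and B = d(b,c), splitting a and c
   into their components along b and orthogonal to b gives a . c >= cos (A + B). *)

lemma sphere_dist_triangle:
  fixes a b c :: "'a::real_inner"
  assumes a: "norm a = 1" and b: "norm b = 1" and c: "norm c = 1"
  shows "sphere_dist a c \<le> sphere_dist a b + sphere_dist b c"
proof -
  define A where "A = arccos (a \<bullet> b)"
  define B where "B = arccos (b \<bullet> c)"
  have ab: "\<bar>a \<bullet> b\<bar> \<le> 1" and bc: "\<bar>b \<bullet> c\<bar> \<le> 1" and ac: "\<bar>a \<bullet> c\<bar> \<le> 1"
    using inner_unit_bound assms by blast+
  have A: "0 \<le> A" "A \<le> pi" "cos A = a \<bullet> b" "sin A = sqrt (1 - (a \<bullet> b)^2)"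
    using ab by (auto simp: A_def arccos_lbound arccos_ubound sin_arccos abs_le_iff)
  have B: "0 \<le> B" "B \<le> pi" "cos B = b \<bullet> c" "sin B = sqrt (1 - (b \<bullet> c)^2)"
    using bc by (auto simp: B_def arccos_lbound arccos_ubound sin_arccos abs_le_iff)
  show ?thesis
  proof (cases "A + B \<le> pi")
    case False
    then show ?thesis
      using arccos_ubound[of "a \<bullet> c"] ac unfolding sphere_dist_def A_def B_def by (auto simp: abs_le_iff)
  next
    case True
    define a' where "a' = a - (a \<bullet> b) *\<^sub>R b"
    define c' where "c' = c - (b \<bullet> c) *\<^sub>R b"
    have bb: "b \<bullet> b = 1" and aa: "a \<bullet> a = 1" and cc: "c \<bullet> c = 1"
      using assms by (simp_all add: norm_eq_1)
    have split: "a \<bullet> c = (a \<bullet> b) * (b \<bullet> c) + a' \<bullet> c'"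
      unfolding a'_def c'_def by (simp add: algebra_simps inner_commute bb)
    have "(norm a')^2 = 1 - (a \<bullet> b)^2"
      unfolding a'_def power2_norm_eq_inner by (simp add: algebra_simps inner_commute bb aa power2_eq_square)
    then have na: "norm a' = sin A" using A by (simp add: real_sqrt_unique)
    have "(norm c')^2 = 1 - (b \<bullet> c)^2"
      unfolding c'_def power2_norm_eq_inner by (simp add: algebra_simps inner_commute bb cc power2_eq_square)
    then have nc: "norm c' = sin B" using B by (simp add: real_sqrt_unique)
    have "- (norm a' * norm c') \<le> a' \<bullet> c'"
      using Cauchy_Schwarz_ineq2[of a' c'] by (simp add: abs_le_iff)
    then have "cos (A + B) \<le> a \<bullet> c" using split A B na nc by (simp add: cos_add)
    then have "arccos (a \<bullet> c) \<le> arccos (cos (A + B))"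
      using ac by (subst arccos_le_mono) (auto simp: abs_le_iff)
    also have "\<dots> = A + B" using True A B by (simp add: arccos_cos)
    finally show ?thesis unfolding sphere_dist_def A_def B_def .
  qed
qed

lemma sin_concave:
  fixes r x :: real
  assumes "0 \<le> r" "r \<le> 1" "0 \<le> x" "x \<le> pi"
  shows "r * sin x \<le> sin (r * x)"
proof -
  have "(\<lambda>y. sin (r*y) - r * sin y) 0 \<le> (\<lambda>y. sin (r*y) - r * sin y) x"
  proof (rule DERIV_nonneg_imp_nondecreasing[OF assms(3)])
    fix y assume y: "0 \<le> y" "y \<le> x"
    have deriv: "DERIV (\<lambda>y. sin (r*y) - r * sin y) y :> (cos (r*y) * r - r * cos y)"
      by (auto intro!: derivative_eq_intros)
    have "r * y \<le> y" using y assms by (simp add: mult_left_le_one_le)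
    then have "cos y \<le> cos (r * y)" using y assms by (intro cos_monotone_0_pi_le) auto
    then have "0 \<le> cos (r*y) * r - r * cos y" using assms
      by (metis diff_ge_0_iff_ge mult.commute mult_left_mono)
    then show "\<exists>d. DERIV (\<lambda>y. sin (r*y) - r * sin y) y :> d \<and> d \<ge> 0" using deriv by blast
  qed
  then show ?thesis by simp
qed

(* A rotation by theta moves a unit vector at angle phi from the axis through the angle
   arccos (1 - (1 - cos theta) r^2), where r = sin phi (see rot_displacement).  This angle
   is at most theta r: halving both angles, it is the concavity of sin on [0, pi/2]. *)

lemma rotation_chord_angle_bound:
  fixes r th :: real
  assumes r: "0 \<le> r" "r \<le> 1" and th: "0 \<le> th"
  shows "arccos (1 - (1 - cos th) * r^2) \<le> th * r"
proof -
  define th' where "th' = arccos (cos th)"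
  have th': "0 \<le> th'" "th' \<le> pi" "cos th' = cos th" unfolding th'_def
    by (auto intro: arccos_lbound arccos_ubound)
  have th'_le: "th' \<le> th"
    using th th'(2) by (cases "th \<le> pi") (simp_all add: th'_def arccos_cos)
  define x where "x = th' / 2"
  have x: "0 \<le> x" "x \<le> pi / 2" using th' by (auto simp: x_def)
  have "r * sin x \<le> sin (r * x)" using sin_concave[of r x] x r by simp
  moreover have "0 \<le> r * sin x" using x r by (simp add: sin_ge_zero)
  ultimately have sq: "(r * sin x)^2 \<le> (sin (r * x))^2" by (simp add: power_mono)
  have cos_rx: "cos (th' * r) = 1 - 2 * (sin (r * x))^2"
    using cos_double_sin[of "r * x"] by (simp add: x_def mult.commute)
  have "(sin x)^2 = (1 - cos th) / 2"
    using cos_double_sin[of x] th'(3) by (simp add: x_def)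
  then have "r^2 * ((1 - cos th) / 2) \<le> (sin (r * x))^2"
    using sq by (metis power_mult_distrib)
  then have le: "cos (th' * r) \<le> 1 - (1 - cos th) * r^2"
    unfolding cos_rx by (simp add: algebra_simps)
  have rng: "0 \<le> th' * r" "th' * r \<le> pi"
    using th' r by (auto intro: order.trans[OF mult_right_le_one_le])
  have "0 \<le> (1 - cos th) * r^2" by simp
  moreover have "(1 - cos th) * r^2 \<le> 2"
    using mult_mono[of "1 - cos th" 2 "r^2" 1] r by (simp add: power_le_one cos_ge_minus_one)
  ultimately have bnd: "\<bar>1 - (1 - cos th) * r^2\<bar> \<le> 1" by (simp add: abs_le_iff)
  have "arccos (1 - (1 - cos th) * r^2) \<le> arccos (cos (th' * r))"
    using le bnd by (subst arccos_le_mono) auto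
  also have "\<dots> = th' * r" using rng by (simp add: arccos_cos)
  also have "\<dots> \<le> th * r" using th'_le r by (simp add: mult_right_mono)
  finally show ?thesis .
qed

lemma rot_displacement:
  fixes C u :: "real^3"
  assumes u: "norm u = 1" and C: "C \<noteq> 0" and tau: "0 \<le> \<tau>"
  shows "sphere_dist u (rot \<tau> C *v u) \<le> \<tau> * norm (C \<times> u)"
proof -
  define v where "v = inverse (norm C) *\<^sub>R C"
  define th where "th = \<tau> * norm C"
  have v: "norm v = 1" using C by (simp add: v_def)
  have R: "rot \<tau> C = rot_unit th v" by (simp add: rot_def th_def v_def)
  define r where "r = norm (v \<times> u)"
  have r2: "r^2 + (v \<bullet> u)^2 = 1" using norm_cross_dot[of v u] u v by (simp add: r_def)
  have "r^2 \<le> 1" using r2 zero_le_power2[of "v \<bullet> u"] by linarith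
  then have r: "0 \<le> r" "r \<le> 1" by (auto simp: r_def abs_square_le_1)
  have "u \<bullet> (rot \<tau> C *v u) = cos th + (1 - cos th) * (v \<bullet> u)^2"
    using u unfolding R rot_unit_apply
    by (simp add: inner_add_right norm_eq_1 dot_cross_self inner_commute power2_eq_square)
  also have "\<dots> = 1 - (1 - cos th) * r^2" using r2 by algebra
  finally have "sphere_dist u (rot \<tau> C *v u) = arccos (1 - (1 - cos th) * r^2)"
    by (simp add: sphere_dist_def)
  also have "\<dots> \<le> th * r" using rotation_chord_angle_bound r tau C by (simp add: th_def)
  also have "th * r = \<tau> * norm (C \<times> u)"
    using C by (simp add: th_def r_def v_def cross_mult_left)
  finally show ?thesis .
qed

section \<open>The cost function and a lower bound for the cost of a word\<close>

lemma span_pair_coords: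
  fixes X Y C :: "'a::real_vector"
  assumes "C \<in> span {X, Y}"
  shows "\<exists>a b. C = a *\<^sub>R X + b *\<^sub>R Y"
proof -
  obtain k where "C - k *\<^sub>R X \<in> span {Y}" using assms by (auto simp: span_insert)
  then obtain j where "C - k *\<^sub>R X = j *\<^sub>R Y" by (auto simp: span_singleton)
  then have "C = k *\<^sub>R X + j *\<^sub>R Y" by (simp add: algebra_simps)
  then show ?thesis by blast
qed

(* Two non-parallel unit vectors are linearly independent: pairing a relation with X and
   with Y gives a linear system with determinant 1 - (X . Y)^2 > 0. *)

lemma unit_pair_coords_unique:
  fixes X Y :: "'a::real_inner"
  assumes X: "norm X = 1" and Y: "norm Y = 1" and XY: "\<bar>X \<bullet> Y\<bar> < 1"
    and eq: "a *\<^sub>R X + b *\<^sub>R Y = a' *\<^sub>R X + b' *\<^sub>R Y"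
  shows "a = a' \<and> b = b'"
proof -
  define c where "c = X \<bullet> Y"
  have XX: "X \<bullet> X = 1" and YY: "Y \<bullet> Y = 1" using X Y by (simp_all add: norm_eq_1)
  have YX: "Y \<bullet> X = c" by (simp add: c_def inner_commute)
  have on_X: "a + b * c = a' + b' * c"
    using arg_cong[OF eq, of "\<lambda>v. v \<bullet> X"] by (simp add: inner_add_left XX YX)
  have on_Y: "a * c + b = a' * c + b'"
    using arg_cong[OF eq, of "\<lambda>v. v \<bullet> Y"] by (simp add: inner_add_left YY c_def)
  have "(a - a') * (1 - c * c) = 0" "(b - b') * (1 - c * c) = 0"
    using on_X on_Y by algebra+
  moreover have "c * c < 1" using XY unfolding c_def by (metis abs_square_less_1 power2_eq_square)
  ultimately show ?thesis by simp
qed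

lemma cost_coords:
  fixes X Y :: "real^3"
  assumes "norm X = 1" and "norm Y = 1" and "\<bar>X \<bullet> Y\<bar> < 1"
  shows "cost \<kappa> X Y (a *\<^sub>R X + b *\<^sub>R Y) = \<bar>a\<bar> + \<kappa> * \<bar>b\<bar>"
  unfolding cost_def
proof (rule the_equality)
  fix r assume "\<exists>a' b'. a *\<^sub>R X + b *\<^sub>R Y = a' *\<^sub>R X + b' *\<^sub>R Y \<and> r = \<bar>a'\<bar> + \<kappa> * \<bar>b'\<bar>"
  then show "r = \<bar>a\<bar> + \<kappa> * \<bar>b\<bar>" using unit_pair_coords_unique[OF assms] by metis
qed auto

lemma decomp_rotation_matrix: "is_decomp X Y g ds \<Longrightarrow> rotation_matrix g"
proof (induction ds arbitrary: g)
  case Nil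
  then show ?case by (auto simp: is_decomp_def word_prod_def rotation_matrix_def orthogonal_matrix_id)
next
  case (Cons f ds)
  obtain t C where f: "f = (t, C)" by fastforce
  have "is_decomp X Y (word_prod ds) ds" and "C \<noteq> 0" and "g = rot t C ** word_prod ds"
    using Cons.prems by (auto simp: is_decomp_def word_prod_def f)
  then show ?case using Cons.IH rotation_matrix_rot rotation_matrix_mul by metis
qed

(* A factor R(tau C), C = aX + bY, costs tau |a| and moves Y by at most
   tau |C x Y| = tau |a| |X x Y|; the displacements add up by the triangle inequality,
   since the remaining factors are isometries. *)

lemma decomp_displacement_bound:
  fixes X Y :: "real^3"
  assumes X: "norm X = 1" and Y: "norm Y = 1" and XY: "\<bar>X \<bullet> Y\<bar> < 1"
  shows "is_decomp X Y g ds \<Longrightarrow> sphere_dist Y (g *v Y) \<le> norm (X \<times> Y) * word_cost 0 X Y ds"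
proof (induction ds arbitrary: g)
  case Nil
  then have "g = mat 1" by (simp add: is_decomp_def word_prod_def)
  then show ?case using Y by (simp add: sphere_dist_def word_cost_def norm_eq_1)
next
  case (Cons f ds)
  obtain t C where f: "f = (t, C)" by fastforce
  define R where "R = rot t C"
  define h where "h = word_prod ds"
  have t: "0 \<le> t" and C: "C \<noteq> 0" and "C \<in> span {X, Y}" and g: "g = R ** h"
    and dec: "is_decomp X Y h ds"
    using Cons.prems by (auto simp: is_decomp_def word_prod_def f R_def h_def)
  then obtain a b where Cab: "C = a *\<^sub>R X + b *\<^sub>R Y" using span_pair_coords by blast
  have oR: "orthogonal_matrix R" using rotation_matrix_rot[OF C] by (simp add: R_def rotation_matrix_def)
  have oh: "orthogonal_matrix h" using decomp_rotation_matrix[OF dec] by (simp add: rotation_matrix_def)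
  have "sphere_dist Y (g *v Y) \<le> sphere_dist Y (R *v Y) + sphere_dist (R *v Y) (R *v (h *v Y))"
    using sphere_dist_triangle[of Y "R *v Y" "R *v (h *v Y)"] Y
      orthogonal_matrix_norm[OF oR] orthogonal_matrix_norm[OF oh]
    by (simp add: g matrix_vector_mul_assoc[symmetric])
  also have "\<dots> = sphere_dist Y (R *v Y) + sphere_dist Y (h *v Y)"
    using sphere_dist_orthogonal_matrix[OF oR] by simp
  also have "\<dots> \<le> t * norm (C \<times> Y) + norm (X \<times> Y) * word_cost 0 X Y ds"
    using rot_displacement[OF Y C t] Cons.IH[OF dec] by (simp add: R_def add_mono)
  also have "\<dots> = norm (X \<times> Y) * word_cost 0 X Y (f # ds)"
    using cost_coords[OF X Y XY, of 0 a b]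
    by (simp add: f Cab word_cost_def cross_add_left cross_mult_left algebra_simps)
  finally show ?case .
qed

section \<open>The Euler decomposition\<close>

lemma orthonormal_frame:
  fixes N Y w :: "real^3"
  assumes N: "norm N = 1" and Y: "norm Y = 1" and NY: "N \<bullet> Y = 0"
  shows "w = (w \<bullet> N) *\<^sub>R N + (w \<bullet> Y) *\<^sub>R Y + (w \<bullet> (N \<times> Y)) *\<^sub>R (N \<times> Y)"
proof -
  define e where "e = N \<times> Y"
  define r where "r = w - (w \<bullet> N) *\<^sub>R N - (w \<bullet> Y) *\<^sub>R Y"
  have NN: "N \<bullet> N = 1" and YY: "Y \<bullet> Y = 1" using N Y by (simp_all add: norm_eq_1)
  have YN: "Y \<bullet> N = 0" using NY by (simp add: inner_commute)
  have rN: "r \<bullet> N = 0" and rY: "r \<bullet> Y = 0" unfolding r_def by (simp_all add: inner_diff_left NN YN YY NY)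
  have ee: "e \<bullet> e = 1" using norm_cross[of N Y] N Y NY unfolding e_def
    by (simp add: power2_norm_eq_inner)
  have "r \<times> (N \<times> Y) = 0" using Lagrange[of r N Y] rN rY by simp
  then have "e \<times> r = 0" unfolding e_def using cross_skew[of r "N \<times> Y"] by simp
  then have "r = (e \<bullet> r) *\<^sub>R e" using Lagrange[of e e r] ee by simp
  moreover have "e \<bullet> r = w \<bullet> e" unfolding r_def e_def
    by (simp add: inner_diff_right dot_cross_self inner_commute)
  ultimately show ?thesis unfolding r_def e_def by (simp add: algebra_simps)
qed

lemma rotation_eq_on_frame:
  fixes M g :: "real^3^3" and N Y :: "real^3"
  assumes M: "rotation_matrix M" and g: "rotation_matrix g"
    and N: "norm N = 1" and Y: "norm Y = 1" and NY: "N \<bullet> Y = 0"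
    and MN: "M *v N = g *v N" and MY: "M *v Y = g *v Y"
  shows "M = g"
  unfolding matrix_eq
proof
  fix x
  have Me: "M *v (N \<times> Y) = g *v (N \<times> Y)"
    using cross_rotation_matrix[OF M, of N Y] cross_rotation_matrix[OF g, of N Y] MN MY by simp
  note frame = orthonormal_frame[OF N Y NY, of x]
  have "M *v x = (x \<bullet> N) *\<^sub>R (M *v N) + (x \<bullet> Y) *\<^sub>R (M *v Y) + (x \<bullet> (N \<times> Y)) *\<^sub>R (M *v (N \<times> Y))"
    by (subst frame) (simp add: matrix_vector_right_distrib matrix_vector_mult_scaleR)
  also have "\<dots> = g *v x"
    by (subst (3) frame) (simp add: matrix_vector_right_distrib matrix_vector_mult_scaleR MN MY Me)
  finally show "M *v x = g *v x" .
qed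

lemma rotation_fixing_axis:
  fixes h :: "real^3^3" and N Y :: "real^3"
  assumes h: "rotation_matrix h" and N: "norm N = 1" and Y: "norm Y = 1" and NY: "N \<bullet> Y = 0"
    and hY: "h *v Y = Y"
  shows "\<exists>b. 0 \<le> b \<and> b \<le> 2 * pi \<and> h = rot_unit b Y"
proof -
  define e where "e = N \<times> Y"
  define w where "w = h *v N"
  have oh: "orthogonal_matrix h" using h by (simp add: rotation_matrix_def)
  have "w \<bullet> Y = 0" using orthogonal_matrix_inner[OF oh, of N Y] NY hY by (simp add: w_def)
  then have w: "w = (w \<bullet> N) *\<^sub>R N + (w \<bullet> e) *\<^sub>R e"
    using orthonormal_frame[OF N Y NY, of w] by (simp add: e_def)
  have "1 = w \<bullet> w" using orthogonal_matrix_inner[OF oh, of N N] N by (simp add: w_def norm_eq_1)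
  also have "\<dots> = w \<bullet> ((w \<bullet> N) *\<^sub>R N + (w \<bullet> e) *\<^sub>R e)" by (rule arg_cong[OF w])
  also have "\<dots> = (w \<bullet> N)^2 + (- (w \<bullet> e))^2" by (simp add: inner_add_right power2_eq_square)
  finally have "(w \<bullet> N)^2 + (- (w \<bullet> e))^2 = 1" ..
  then obtain b where b: "0 \<le> b" "b \<le> 2 * pi" "w \<bullet> N = cos b" "- (w \<bullet> e) = sin b"
    using sincos_total_2pi_le by metis
  have we: "w \<bullet> e = - sin b" using b(4) by simp
  have "w = cos b *\<^sub>R N + (- sin b) *\<^sub>R e" using w unfolding b(3) we .
  moreover have "Y \<times> N = - e" unfolding e_def using cross_skew[of Y N] by simp
  ultimately have "rot_unit b Y *v N = h *v N"
    using NY unfolding w_def[symmetric] by (simp add: rot_unit_apply inner_commute)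
  moreover have "rot_unit b Y *v Y = h *v Y" using Y hY by (simp add: rot_unit_axis)
  ultimately have "rot_unit b Y = h"
    using rotation_eq_on_frame[OF rotation_matrix_rot_unit[OF Y] h N Y NY] by blast
  then show ?thesis using b by blast
qed


(* Tilting Y by beta = d(Y, p) about N and then spinning about Y reaches every unit vector
   p: the spin angle a is the longitude of p in the frame (N x Y, N) orthogonal to Y. *)

lemma tilt_and_spin:
  fixes N Y p :: "real^3"
  assumes N: "norm N = 1" and Y: "norm Y = 1" and NY: "N \<bullet> Y = 0" and p: "norm p = 1"
  shows "\<exists>a. 0 \<le> a \<and> a \<le> 2 * pi \<and> (rot_unit a Y ** rot_unit (sphere_dist Y p) N) *v Y = p"
proof -
  define e where "e = N \<times> Y"
  define z where "z = Y \<bullet> p"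
  define \<beta> where "\<beta> = sphere_dist Y p"
  have YY: "Y \<bullet> Y = 1" and pp: "p \<bullet> p = 1" using Y p by (simp_all add: norm_eq_1)
  have YN: "Y \<bullet> N = 0" using NY by (simp add: inner_commute)
  have eY: "Y \<bullet> e = 0" unfolding e_def by (simp add: dot_cross_self)
  have Ye: "Y \<times> e = N" unfolding e_def using Lagrange[of Y N Y] YY YN by simp
  note frame = orthonormal_frame[OF N Y NY, folded e_def]
  have z: "\<bar>z\<bar> \<le> 1" unfolding z_def using inner_unit_bound[OF Y p] .
  have cb: "cos \<beta> = z" using z by (simp add: \<beta>_def sphere_dist_def z_def abs_le_iff)
  have sb: "sin \<beta> = sqrt (1 - z^2)" using z by (simp add: \<beta>_def sphere_dist_def z_def sin_arccos abs_le_iff)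
  have "p \<bullet> p = p \<bullet> ((p \<bullet> N) *\<^sub>R N + (p \<bullet> Y) *\<^sub>R Y + (p \<bullet> e) *\<^sub>R e)"
    by (rule arg_cong[OF frame])
  also have "\<dots> = (p \<bullet> N)^2 + z^2 + (p \<bullet> e)^2"
    by (simp add: inner_add_right z_def inner_commute power2_eq_square)
  finally have "p \<bullet> p = (p \<bullet> N)^2 + z^2 + (p \<bullet> e)^2" .
  moreover have "(sin \<beta>)^2 = 1 - z^2" using sb z by (simp add: abs_square_le_1)
  ultimately have sq: "(p \<bullet> e)^2 + (p \<bullet> N)^2 = (sin \<beta>)^2" using pp by simp
  obtain a where a: "0 \<le> a" "a \<le> 2 * pi" "p \<bullet> e = sin \<beta> * cos a" "p \<bullet> N = sin \<beta> * sin a"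
  proof (cases "sin \<beta> = 0")
    case True
    then have "p \<bullet> e = 0" "p \<bullet> N = 0" using sq by (simp_all add: sum_power2_eq_zero_iff)
    then show ?thesis using that[of 0] True by simp
  next
    case False
    then have "(p \<bullet> e / sin \<beta>)^2 + (p \<bullet> N / sin \<beta>)^2 = 1"
      using sq by (simp add: power_divide add_divide_distrib[symmetric])
    from sincos_total_2pi_le[OF this] obtain t where
      "0 \<le> t" "t \<le> 2 * pi" "p \<bullet> e / sin \<beta> = cos t" "p \<bullet> N / sin \<beta> = sin t"
      by blast
    then show ?thesis using that[of t] False by (simp add: divide_eq_eq mult.commute)
  qed
  have "rot_unit \<beta> N *v Y = cos \<beta> *\<^sub>R Y + sin \<beta> *\<^sub>R e"
    by (simp add: rot_unit_apply NY e_def)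
  then have "(rot_unit a Y ** rot_unit \<beta> N) *v Y = rot_unit a Y *v (cos \<beta> *\<^sub>R Y + sin \<beta> *\<^sub>R e)"
    by (simp add: matrix_vector_mul_assoc[symmetric])
  also have "\<dots> = cos \<beta> *\<^sub>R Y + (sin \<beta> * cos a) *\<^sub>R e + (sin \<beta> * sin a) *\<^sub>R N"
    by (simp add: rot_unit_apply cross_add_right cross_mult_right Ye inner_add_right YY eY algebra_simps)
  also have "\<dots> = (p \<bullet> N) *\<^sub>R N + (p \<bullet> Y) *\<^sub>R Y + (p \<bullet> e) *\<^sub>R e"
    using a cb by (simp add: z_def inner_commute algebra_simps)
  also have "\<dots> = p" by (rule frame[symmetric])
  finally show ?thesis using a by (auto simp: \<beta>_def)
qed

(* After tilting and spinning Y onto gY,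
   what remains of g fixes Y and hence is a rotation about Y. *)

lemma euler_decomposition:
  fixes N Y :: "real^3" and g :: "real^3^3"
  assumes N: "norm N = 1" and Y: "norm Y = 1" and NY: "N \<bullet> Y = 0" and g: "rotation_matrix g"
  shows "\<exists>a b. 0 \<le> a \<and> a \<le> 2 * pi \<and> 0 \<le> b \<and> b \<le> 2 * pi \<and>
           g = rot_unit a Y ** rot_unit (sphere_dist Y (g *v Y)) N ** rot_unit b Y"
proof -
  have "norm (g *v Y) = 1" using g Y by (simp add: rotation_matrix_def orthogonal_matrix_norm)
  then obtain a where a: "0 \<le> a" "a \<le> 2 * pi"
    and AY: "(rot_unit a Y ** rot_unit (sphere_dist Y (g *v Y)) N) *v Y = g *v Y"
    using tilt_and_spin[OF N Y NY] by blast
  define A where "A = rot_unit a Y ** rot_unit (sphere_dist Y (g *v Y)) N"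
  have A: "rotation_matrix A"
    unfolding A_def using rotation_matrix_mul rotation_matrix_rot_unit N Y by blast
  then have AAt: "A ** transpose A = mat 1" and AtA: "transpose A ** A = mat 1"
    by (simp_all add: rotation_matrix_def orthogonal_matrix_def)
  define h where "h = transpose A ** g"
  have "rotation_matrix (transpose A)" using A by (simp add: rotation_matrix_def det_transpose)
  then have "rotation_matrix h" using g by (simp add: h_def rotation_matrix_mul)
  moreover have "h *v Y = Y"
  proof -
    have "h *v Y = transpose A *v (A *v Y)"
      using AY by (simp add: h_def A_def matrix_vector_mul_assoc)
    also have "\<dots> = Y" by (simp add: matrix_vector_mul_assoc AtA)
    finally show ?thesis .
  qed
  ultimately obtain b where b: "0 \<le> b" "b \<le> 2 * pi" "h = rot_unit b Y"
    using rotation_fixing_axis[OF _ N Y NY] by blast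
  have "g = A ** h" by (simp add: h_def matrix_mul_assoc AAt)
  then show ?thesis using a b by (auto simp: A_def)
qed

section \<open>The optimal word\<close>

lemma pattern_axis:
  fixes X Y :: "real^3"
  assumes X: "norm X = 1" and Y: "norm Y = 1"
  shows "(X - (X \<bullet> Y) *\<^sub>R Y) \<bullet> Y = 0" and "norm (X - (X \<bullet> Y) *\<^sub>R Y) = norm (X \<times> Y)"
proof -
  have XX: "X \<bullet> X = 1" and YY: "Y \<bullet> Y = 1" using X Y by (simp_all add: norm_eq_1)
  show "(X - (X \<bullet> Y) *\<^sub>R Y) \<bullet> Y = 0" by (simp add: inner_diff_left YY)
  have "(norm (X - (X \<bullet> Y) *\<^sub>R Y))^2 = 1 - (X \<bullet> Y)^2"
    unfolding power2_norm_eq_inner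
    by (simp add: inner_diff_left inner_diff_right XX YY inner_commute power2_eq_square)
  moreover have "(norm (X \<times> Y))^2 = 1 - (X \<bullet> Y)^2" using norm_cross_dot[of X Y] X Y by simp
  ultimately show "norm (X - (X \<bullet> Y) *\<^sub>R Y) = norm (X \<times> Y)"
    by (metis norm_ge_zero power2_eq_iff_nonneg)
qed

lemma unit_cross_pos:
  fixes X Y :: "real^3"
  assumes X: "norm X = 1" and Y: "norm Y = 1" and XY: "\<bar>X \<bullet> Y\<bar> < 1"
  shows "0 < norm (X \<times> Y)"
proof -
  have "(norm (X \<times> Y))^2 = 1 - (X \<bullet> Y)^2" using norm_cross_dot[of X Y] X Y by simp
  moreover have "(X \<bullet> Y)^2 < 1" using XY by (simp add: abs_square_less_1)
  ultimately have "norm (X \<times> Y) \<noteq> 0" by auto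
  then show ?thesis by simp
qed

lemma euler_word_decomposes:
  fixes X Y :: "real^3" and g :: "real^3^3"
  assumes X: "norm X = 1" and Y: "norm Y = 1" and XY: "\<bar>X \<bullet> Y\<bar> < 1" and g: "rotation_matrix g"
  shows "\<exists>t1 t2 sg1 sg3. 0 \<le> t1 \<and> t1 \<le> pi \<and> 0 \<le> t2 \<and> t2 \<le> pi \<and>
           is_decomp X Y g [(t1, if sg1 then Y else - Y),
                            (sphere_dist Y (g *v Y) / norm (X \<times> Y), X - (X \<bullet> Y) *\<^sub>R Y),
                            (t2, if sg3 then Y else - Y)]"
proof -
  define W where "W = X - (X \<bullet> Y) *\<^sub>R Y"
  define s where "s = norm (X \<times> Y)"
  define \<beta> where "\<beta> = sphere_dist Y (g *v Y)"
  have WY: "W \<bullet> Y = 0" and nW: "norm W = s" using pattern_axis[OF X Y] by (simp_all add: W_def s_def)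
  have s: "0 < s" using unit_cross_pos[OF X Y XY] by (simp add: s_def)
  define N where "N = inverse s *\<^sub>R W"
  have N: "norm N = 1" and NY: "N \<bullet> Y = 0" using nW s WY by (simp_all add: N_def)
  have "norm (g *v Y) = 1" using g Y by (simp add: rotation_matrix_def orthogonal_matrix_norm)
  then have \<beta>: "0 \<le> \<beta>" using sphere_dist_nonneg Y by (simp add: \<beta>_def)
  obtain a b where ab: "0 \<le> a" "a \<le> 2 * pi" "0 \<le> b" "b \<le> 2 * pi"
    and euler: "g = rot_unit a Y ** rot_unit \<beta> N ** rot_unit b Y"
    using euler_decomposition[OF N Y NY g] by (auto simp: \<beta>_def)
  obtain t1 sg1 where t1: "0 \<le> t1" "t1 \<le> pi" "rot t1 (if sg1 then Y else - Y) = rot_unit a Y"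
    using rot_unit_as_short_rotation[OF Y ab(1,2)] by blast
  obtain t2 sg3 where t2: "0 \<le> t2" "t2 \<le> pi" "rot t2 (if sg3 then Y else - Y) = rot_unit b Y"
    using rot_unit_as_short_rotation[OF Y ab(3,4)] by blast
  have "rot (\<beta> / s) W = rot_unit \<beta> N" using s nW by (simp add: rot_def N_def)
  then have "word_prod [(t1, if sg1 then Y else - Y), (\<beta> / s, W), (t2, if sg3 then Y else - Y)] = g"
    using t1(3) t2(3) by (simp add: word_prod_def euler matrix_mul_assoc)
  moreover have "Y \<in> span {X, Y}" and "W \<in> span {X, Y}"
    by (simp_all add: W_def span_base span_diff span_scale)
  moreover have "Y \<noteq> 0" and "W \<noteq> 0" using Y nW s by auto
  ultimately have "is_decomp X Y g [(t1, if sg1 then Y else - Y), (\<beta> / s, W), (t2, if sg3 then Y else - Y)]"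
    using t1 t2 \<beta> s by (auto simp: is_decomp_def span_neg)
  then show ?thesis using t1 t2 unfolding W_def s_def \<beta>_def by blast
qed

(* For kappa = 0 the rotations about +-Y are free and W has cost 1, so the word above costs t. *)

lemma euler_word_cost:
  fixes X Y :: "real^3"
  assumes X: "norm X = 1" and Y: "norm Y = 1" and XY: "\<bar>X \<bullet> Y\<bar> < 1"
  shows "word_cost 0 X Y [(t1, if sg1 then Y else - Y), (t, X - (X \<bullet> Y) *\<^sub>R Y),
           (t2, if sg3 then Y else - Y)] = t"
proof -
  have "cost 0 X Y (if sg then Y else - Y) = 0" for sg
    using cost_coords[OF X Y XY, of 0 0 1] cost_coords[OF X Y XY, of 0 0 "- 1"] by simp
  moreover have "cost 0 X Y (X - (X \<bullet> Y) *\<^sub>R Y) = 1"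
    using cost_coords[OF X Y XY, of 0 1 "- (X \<bullet> Y)"] by simp
  ultimately show ?thesis by (simp add: word_cost_def)
qed

lemma optimal_decompI:
  assumes "is_decomp X Y g ds"
    and "\<And>ds'. is_decomp X Y g ds' \<Longrightarrow> word_cost \<kappa> X Y ds \<le> word_cost \<kappa> X Y ds'"
  shows "optimal_decomp \<kappa> X Y g ds"
  unfolding optimal_decomp_def using assms by (auto intro!: cInf_eq_minimum[symmetric])

(* The Euler word is optimal: its cost d(Y, gY) / |X x Y| is the lower bound of
   decomp_displacement_bound. *)

lemma optimal_euler_word:
  fixes X Y :: "real^3" and g :: "real^3^3"
  assumes X: "norm X = 1" and Y: "norm Y = 1" and XY: "\<bar>X \<bullet> Y\<bar> < 1" and g: "rotation_matrix g"
  shows "\<exists>t t1 t2 sg1 sg3. 0 \<le> t \<and> 0 \<le> t1 \<and> t1 \<le> pi \<and> 0 \<le> t2 \<and> t2 \<le> pi \<and>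
           optimal_decomp 0 X Y g [(t1, if sg1 then Y else - Y), (t, X - (X \<bullet> Y) *\<^sub>R Y),
                                   (t2, if sg3 then Y else - Y)]"
proof -
  define t where "t = sphere_dist Y (g *v Y) / norm (X \<times> Y)"
  obtain t1 t2 sg1 sg3 where t12: "0 \<le> t1" "t1 \<le> pi" "0 \<le> t2" "t2 \<le> pi"
    and dec: "is_decomp X Y g [(t1, if sg1 then Y else - Y), (t, X - (X \<bullet> Y) *\<^sub>R Y),
                               (t2, if sg3 then Y else - Y)]"
    using euler_word_decomposes[OF X Y XY g] unfolding t_def by blast
  have "0 < norm (X \<times> Y)" by (rule unit_cross_pos[OF X Y XY])
  then have lower: "t \<le> word_cost 0 X Y ds'" if "is_decomp X Y g ds'" for ds'
    using decomp_displacement_bound[OF X Y XY that] by (simp add: t_def divide_le_eq mult.commute)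
  have "norm (g *v Y) = 1" using g Y by (simp add: rotation_matrix_def orthogonal_matrix_norm)
  then have "0 \<le> t" using sphere_dist_nonneg[OF Y] by (simp add: t_def)
  moreover have "optimal_decomp 0 X Y g [(t1, if sg1 then Y else - Y), (t, X - (X \<bullet> Y) *\<^sub>R Y),
                                         (t2, if sg3 then Y else - Y)]"
    using dec lower euler_word_cost[OF X Y XY] by (intro optimal_decompI) simp_all
  ultimately show ?thesis using t12 by blast
qed

section \<open>Matching the patterns\<close>

(* Up to the symmetry rho, the half-turn patterns (IX) and (X) realise all four sign
   choices for the outer rotations about +-Y. *)

lemma pattern_signs:
  "\<exists>\<sigma>\<in>sym_group. \<exists>P\<in>{pattern_IX t, pattern_X t}.
     eval_word 0 c X Y (apply_sym \<sigma> P) =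
     [(pi, if sg1 then Y else - Y), (t, X - c *\<^sub>R Y), (pi, if sg3 then Y else - Y)]"
proof (cases sg1; cases sg3)
  assume "sg1" "sg3" then show ?thesis
    by (intro bexI[of _ id] bexI[of _ "pattern_IX t"])
      (simp_all add: sym_group_def eval_word_def apply_sym_def pattern_IX_def slab_vec_def lab_vec_def)
next
  assume "sg1" "\<not> sg3" then show ?thesis
    by (intro bexI[of _ id] bexI[of _ "pattern_X t"])
      (simp_all add: sym_group_def eval_word_def apply_sym_def pattern_X_def slab_vec_def lab_vec_def)
next
  assume "\<not> sg1" "\<not> sg3" then show ?thesis
    by (intro bexI[of _ rho] bexI[of _ "pattern_IX t"])
      (simp_all add: sym_group_def eval_word_def apply_sym_def pattern_IX_def slab_vec_def lab_vec_def
         rho_def rho_lab_def)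
next
  assume "\<not> sg1" "sg3" then show ?thesis
    by (intro bexI[of _ rho] bexI[of _ "pattern_X t"])
      (simp_all add: sym_group_def eval_word_def apply_sym_def pattern_X_def slab_vec_def lab_vec_def
         rho_def rho_lab_def)
qed

lemma shortened_ends_subword:
  assumes "0 \<le> t1" "t1 \<le> pi" "0 \<le> t2" "t2 \<le> pi"
  shows "is_subword [(t1, A), (t, B), (t2, C)] [(pi, A), (t, B), (pi, C)]"
  unfolding is_subword_def
  by (rule exI[of _ 0], rule exI[of _ 2], rule exI[of _ t1], rule exI[of _ t2]) (simp add: assms)

theorem theorem2p4:
  fixes X Y :: "real^3" and \<alpha> :: real and g :: "real^3^3"
  assumes "norm X = 1" and "norm Y = 1"
    and "0 < \<alpha>" and "\<alpha> \<le> pi / 2" and "X \<bullet> Y = cos \<alpha>"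
    and "g \<in> SO3"
  shows "\<exists>ds. optimal_decomp 0 X Y g ds \<and>
           (\<exists>t \<ge> 0. \<exists>\<sigma> \<in> sym_group. \<exists>P \<in> {pattern_IX t, pattern_X t}.
              is_subword ds (eval_word 0 (cos \<alpha>) X Y (apply_sym \<sigma> P)))"
proof -
  have "0 \<le> cos \<alpha>" using assms(3,4) by (intro cos_ge_zero) auto
  moreover have "cos \<alpha> < 1" using cos_monotone_0_pi[of 0 \<alpha>] assms(3,4) by simp
  ultimately have XY: "\<bar>X \<bullet> Y\<bar> < 1" using assms(5) by simp
  have g: "rotation_matrix g" using assms(6) by (simp add: SO3_def rotation_matrix_def)
  obtain t t1 t2 sg1 sg3 where t: "0 \<le> t" and t12: "0 \<le> t1" "t1 \<le> pi" "0 \<le> t2" "t2 \<le> pi"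
    and opt: "optimal_decomp 0 X Y g [(t1, if sg1 then Y else - Y), (t, X - cos \<alpha> *\<^sub>R Y),
                                      (t2, if sg3 then Y else - Y)]"
    using optimal_euler_word[OF assms(1,2) XY g] unfolding assms(5) by blast
  obtain \<sigma> P where "\<sigma> \<in> sym_group" "P \<in> {pattern_IX t, pattern_X t}"
    and "eval_word 0 (cos \<alpha>) X Y (apply_sym \<sigma> P) =
           [(pi, if sg1 then Y else - Y), (t, X - cos \<alpha> *\<^sub>R Y), (pi, if sg3 then Y else - Y)]"
    using pattern_signs by blast
  then show ?thesis using opt t shortened_ends_subword[OF t12] by metis
qed

end
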